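(* Let $\boldsymbol{\Xi} \in \mathbb{R}^{6\times 3}$ be a matrix whose columns are written as $\boldsymbol{\xi}_j = \begin{pmatrix}\boldsymbol{\alpha}_j \\ \boldsymbol{\beta}_j\end{pmatrix}$, $j=1,2,3$, with $\boldsymbol{\alpha}_j,\boldsymbol{\beta}_j\in\mathbb{R}^3$, so that $\boldsymbol{\Xi} = \begin{bmatrix}\boldsymbol{\alpha}_1 & \boldsymbol{\alpha}_2 & \boldsymbol{\alpha}_3\\ \boldsymbol{\beta}_1 & \boldsymbol{\beta}_2 & \boldsymbol{\beta}_3\end{bmatrix}$. Suppose $$\Vert\boldsymbol{\alpha}_1\Vert \neq 0 \quad\text{and}\quad \boldsymbol{\alpha}_1\times\boldsymbol{\alpha}_2 \neq \boldsymbol{0}.$$ Then there exist a unique screw-transformation matrix $$\boldsymbol{S} = \begin{bmatrix}\boldsymbol{R} & \boldsymbol{0}\\ [\boldsymbol{p}]_\times \boldsymbol{R} & \boldsymbol{R}\end{bmatrix},\qquad \boldsymbol{R}\in SO(3),\ \boldsymbol{p}\in\mathbb{R}^3,$$ and a unique matrix $\boldsymbol{U}\in\mathbb{R}^{6\times 3}$ of the form $$\boldsymbol{U} = \begin{bmatrix}\boldsymbol{U}_1\\ \boldsymbol{U}_2\end{bmatrix} = \begin{bmatrix} u_{11} & u_{12} & u_{13}\\ 0 & u_{22} & u_{23}\\ 0 & 0 & u_{33}\\ u_{41} & u_{42} & u_{43}\\ 0 & u_{52} & u_{53}\\ 0 & 0 & u_{63}\end{bmatrix}$$ (i.e. $\boldsymbol{U}_1,\boldsymbol{U}_2$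 are $3\times 3$ upper-triangular) with $u_{11}>0$ and $u_{22}>0$, such that $\boldsymbol{\Xi} = \boldsymbol{S}\,\boldsymbol{U}$.
   Context: For $\boldsymbol{a}\in\mathbb{R}^3$, $[\boldsymbol{a}]_\times$ denotes the $3\times 3$ skew-symmetric matrix with $[\boldsymbol{a}]_\times \boldsymbol{b} = \boldsymbol{a}\times\boldsymbol{b}$ for all $\boldsymbol{b}\in\mathbb{R}^3$. A screw-transformation matrix is a $6\times 6$ matrix of the form $\begin{bmatrix}\boldsymbol{R} & \boldsymbol{0}\\ [\boldsymbol{p}]_\times\boldsymbol{R} & \boldsymbol{R}\end{bmatrix}$ with $\boldsymbol{R}$ a $3\times3$ rotation matrix (orthogonal, determinant $+1$) and $\boldsymbol{p}\in\mathbb{R}^3$. A factorization $\boldsymbol{\Xi}=\boldsymbol{S}\boldsymbol{U}$ as in the claim is called an $SU$-decomposition. *)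

theory Defs
  imports "HOL-Analysis.Analysis" "HOL-Analysis.Cross3"
begin

definition skew :: "real^3 \<Rightarrow> real^3^3" where
  "skew a = matrix (\<lambda>b. cross3 a b)"

text \<open>Block representation: a 6x3 matrix is a pair (top 3x3 block, bottom 3x3 block);
  a 6x6 matrix is a quadruple of 3x3 blocks ((M11, M12), (M21, M22)).\<close>
type_synonym mat63 = "(real^3^3) \<times> (real^3^3)"
type_synonym mat66 = "mat63 \<times> mat63"

definition blockmult :: "mat66 \<Rightarrow> mat63 \<Rightarrow> mat63" where
  "blockmult M U =
     (fst (fst M) ** fst U + snd (fst M) ** snd U,
      fst (snd M) ** fst U + snd (snd M) ** snd U)"

definition screw :: "real^3^3 \<Rightarrow> real^3 \<Rightarrow> mat66" where
  "screw R p = ((R, 0), (skew p ** R, R))"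

definition is_screw :: "mat66 \<Rightarrow> bool" where
  "is_screw S \<longleftrightarrow> (\<exists>R p. rotation_matrix R \<and> S = screw R p)"

definition upper_triangular3 :: "real^3^3 \<Rightarrow> bool" where
  "upper_triangular3 M \<longleftrightarrow> M $ 2 $ 1 = 0 \<and> M $ 3 $ 1 = 0 \<and> M $ 3 $ 2 = 0"

end

theory Submission
  imports Defs
begin

text \<open>The top block of the factorisation says A = R U1 with R a rotation and U1 upper triangular:
  the first two columns of R are forced to be the Gram-Schmidt orthonormalisation of the first two
  columns of A (the signs being fixed by u11 > 0 and u22 > 0), and det R = 1 forces the third column
  to be their cross product. Since R is a rotation, [p]x R = R [q]x with q = R^T p, so the bottom
  block says U2 = R^T B - [q]x U1. Lower triangularity of U2 is a linear system for q which is
  triangular with pivots u11 and u22, hence uniquely solvable.\<close>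

lemma skew_components:
  "skew q = vector [vector [0, - q$3, q$2], vector [q$3, 0, - q$1], vector [- q$2, q$1, 0]]"
  by (simp add: skew_def matrix_def cross3_def axis_def vec_eq_iff forall_3 vector_3)

lemma skew_mult_vector [simp]: "skew p *v x = cross3 p x"
  by (simp add: skew_def matrix_def matrix_vector_mult_def sum_3 axis_def cross3_simps)

lemma column_matrix_mult: "column j (M ** N) = M *v column j N"
  by (simp add: column_def matrix_matrix_mult_def matrix_vector_mult_def vec_eq_iff)

lemma transpose_mult_entry: "(transpose M ** N) $ i $ j = column i M \<bullet> column j (N :: real^'k^'n)"
  by (simp add: column_def matrix_matrix_mult_def transpose_def inner_vec_def)

lemma orthogonal_matrix_columns_inner:
  fixes R :: "real^'n^'n"
  assumes "orthogonal_matrix R"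
  shows "column i R \<bullet> column i R = 1" and "i \<noteq> j \<Longrightarrow> column i R \<bullet> column j R = 0"
  using assms by (auto simp: orthogonal_matrix_orthonormal_columns orthogonal_def norm_eq_1)

lemma orthogonal_matrix_transpose_mult_eq_iff:
  assumes "orthogonal_matrix R"
  shows "transpose R *v p = q \<longleftrightarrow> p = R *v q"
  using assms unfolding orthogonal_matrix_def
  by (metis matrix_vector_mul_assoc matrix_vector_mul_lid)

lemma rotation_matrix_column_3:
  assumes "rotation_matrix R"
  shows "column 3 R = cross3 (column 1 R) (column 2 R)"
  using cross_rotation_matrix[OF assms, of "axis 1 1" "axis 2 1"]
  by (simp add: matrix_vector_mult_basis cross_basis)

lemma columns_transpose_vector3:
  fixes u v w :: "'a::zero^3"
  shows "column 1 (transpose (vector [u, v, w] :: 'a^3^3)) = u"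
    and "column 2 (transpose (vector [u, v, w] :: 'a^3^3)) = v"
    and "column 3 (transpose (vector [u, v, w] :: 'a^3^3)) = w"
  by (simp_all add: row_def vector_3 vec_lambda_eta)

lemma rotation_matrix_orthonormal_frame:
  fixes u v :: "real^3"
  assumes u: "norm u = 1" and v: "norm v = 1" and uv: "u \<bullet> v = 0"
  shows "rotation_matrix (transpose (vector [u, v, cross3 u v] :: real^3^3))"
proof -
  have "norm (cross3 u v) ^ 2 = 1"
    using norm_cross_dot[of u v] u v uv by simp
  then have w: "norm (cross3 u v) = 1"
    using norm_ge_zero[of "cross3 u v"] by (auto simp: power2_eq_1_iff)
  have "orthogonal_matrix (transpose (vector [u, v, cross3 u v] :: real^3^3))"
    unfolding orthogonal_matrix_orthonormal_columns forall_3 columns_transpose_vector3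
    using u v w uv by (simp add: orthogonal_def dot_cross_self inner_commute)
  moreover have "det (vector [u, v, cross3 u v] :: real^3^3) = cross3 u v \<bullet> cross3 u v"
    by (metis dot_cross_det cross_triple inner_commute)
  ultimately show ?thesis
    using w by (simp add: rotation_matrix_def det_transpose norm_eq_1)
qed

lemma positive_scaleR_unit_eq:
  fixes x y :: "'a::real_normed_vector"
  assumes "c *\<^sub>R x = d *\<^sub>R y" "0 < c" "0 < d" "norm x = 1" "norm y = 1"
  shows "x = y"
proof -
  have "c = d"
    using arg_cong[OF assms(1), of norm] assms(2-5) by simp
  then show ?thesis
    using assms(1,2) by simp
qed

lemma column_mult_upper_triangular3:
  assumes "upper_triangular3 U"
  shows "column 1 (R ** U) = U$1$1 *\<^sub>R column 1 R"
    and "column 2 (R ** U) = U$1$2 *\<^sub>R column 1 R + U$2$2 *\<^sub>R column 2 (R :: real^3^3)"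
  unfolding column_matrix_mult using assms
  by (simp_all add: matrix_vector_mult_def column_def upper_triangular3_def vec_eq_iff sum_3)

lemma rotation_upper_triangular3_factor_exists:
  fixes A :: "real^3^3"
  assumes indep: "cross3 (column 1 A) (column 2 A) \<noteq> 0"
  shows "\<exists>R U. rotation_matrix R \<and> upper_triangular3 U \<and> U$1$1 > 0 \<and> U$2$2 > 0 \<and> A = R ** U"
proof -
  define n1 where "n1 = norm (column 1 A)"
  define u where "u = (1 / n1) *\<^sub>R column 1 A"
  define k where "k = column 2 A \<bullet> u"
  define w where "w = column 2 A - k *\<^sub>R u"
  define v where "v = (1 / norm w) *\<^sub>R w"
  define R where "R = transpose (vector [u, v, cross3 u v] :: real^3^3)"
  have "column 1 A \<noteq> 0"
    using indep by auto
  then have a1: "column 1 A = n1 *\<^sub>R u" and u: "norm u = 1"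
    by (simp_all add: u_def n1_def)
  have "w \<noteq> 0"
  proof
    assume "w = 0"
    then have "column 2 A = (k / n1) *\<^sub>R column 1 A"
      by (simp add: w_def u_def)
    then show False
      using indep by (metis cross_mult_right cross_refl scale_zero_right)
  qed
  then have a2: "column 2 A = k *\<^sub>R u + norm w *\<^sub>R v" and v: "norm v = 1"
    by (simp_all add: v_def w_def)
  have uv: "u \<bullet> v = 0"
    using u by (simp add: v_def w_def k_def inner_diff_right norm_eq_1 inner_commute)
  have rot: "rotation_matrix R"
    unfolding R_def using u v uv by (rule rotation_matrix_orthonormal_frame)
  define U where "U = transpose R ** A"
  have U: "U$i$j = column i R \<bullet> column j A" for i j
    by (simp add: U_def transpose_mult_entry)
  have "upper_triangular3 U" "U$1$1 = n1" "U$2$2 = norm w"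
    unfolding upper_triangular3_def U R_def columns_transpose_vector3 a1 a2
    using u v uv by (simp_all add: inner_add_right dot_cross_self inner_commute norm_eq_1)
  moreover have "A = R ** U"
    using rot by (simp add: U_def matrix_mul_assoc rotation_matrix_def orthogonal_matrix_def)
  moreover have "n1 > 0" "norm w > 0"
    using \<open>column 1 A \<noteq> 0\<close> \<open>w \<noteq> 0\<close> by (simp_all add: n1_def)
  ultimately show ?thesis
    using rot by metis
qed

lemma rotation_upper_triangular3_factor_unique:
  assumes R: "rotation_matrix R" "upper_triangular3 U" "U$1$1 > 0" "U$2$2 > 0"
    and R': "rotation_matrix R'" "upper_triangular3 U'" "U'$1$1 > 0" "U'$2$2 > 0"
    and eq: "R ** U = R' ** U'"
  shows "R = R' \<and> U = U'"
proof -
  have orth: "orthogonal_matrix R" "orthogonal_matrix R'"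
    using R(1) R'(1) by (simp_all add: rotation_matrix_def)
  have unit: "norm (column i R) = 1" "norm (column i R') = 1" for i
    using orth by (simp_all add: orthogonal_matrix_orthonormal_columns)
  note col = column_mult_upper_triangular3[OF R(2), of R]
    and col' = column_mult_upper_triangular3[OF R'(2), of R']
  have "U$1$1 *\<^sub>R column 1 R = U'$1$1 *\<^sub>R column 1 R'"
    using col(1) col'(1) eq by metis
  then have col1: "column 1 R = column 1 R'"
    using R(3) R'(3) unit by (rule positive_scaleR_unit_eq)
  have "U$1$2 = column 1 R \<bullet> column 2 (R ** U)"
    unfolding col using orthogonal_matrix_columns_inner[OF orth(1)] by (simp add: inner_add_right)
  also have "\<dots> = U'$1$2"
    unfolding eq col' col1 using orthogonal_matrix_columns_inner[OF orth(2)]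
    by (simp add: inner_add_right)
  finally have "U$2$2 *\<^sub>R column 2 R = U'$2$2 *\<^sub>R column 2 R'"
    using col(2) col'(2) eq col1 by (metis add_left_cancel)
  then have col2: "column 2 R = column 2 R'"
    using R(4) R'(4) unit by (rule positive_scaleR_unit_eq)
  have "\<forall>j. column j R = column j R'"
    using col1 col2 rotation_matrix_column_3[OF R(1)] rotation_matrix_column_3[OF R'(1)]
    by (simp add: forall_3)
  then have "R = R'"
    by (simp add: column_def vec_eq_iff)
  moreover have "U = U'"
    using arg_cong[OF eq, of "(**) (transpose R)"] orth(1) \<open>R = R'\<close>
    by (simp add: matrix_mul_assoc orthogonal_matrix_def)
  ultimately show ?thesis ..
qed

lemma upper_triangular3_diff_skew_mult_iff:
  assumes "upper_triangular3 U"
  shows "upper_triangular3 (C - skew q ** U) \<longleftrightarrow>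
    C$2$1 = q$3 * U$1$1 \<and> C$3$1 = - q$2 * U$1$1 \<and> C$3$2 = q$1 * U$2$2 - q$2 * U$1$2"
  using assms
  by (auto simp: upper_triangular3_def skew_components matrix_matrix_mult_def sum_3 vector_3)

lemma ex1_upper_triangular3_diff_skew_mult:
  assumes ut: "upper_triangular3 U" and nz: "U$1$1 \<noteq> 0" "U$2$2 \<noteq> 0"
  shows "\<exists>!q. upper_triangular3 (C - skew q ** U)"
proof -
  define q2 where "q2 = - C$3$1 / U$1$1"
  define q :: "real^3" where "q = vector [(C$3$2 + q2 * U$1$2) / U$2$2, q2, C$2$1 / U$1$1]"
  have triangular_system: "upper_triangular3 (C - skew q' ** U) \<longleftrightarrow>
      q'$3 = C$2$1 / U$1$1 \<and> q'$2 = q2 \<and> q'$1 = (C$3$2 + q'$2 * U$1$2) / U$2$2" for q'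
    using nz unfolding upper_triangular3_diff_skew_mult_iff[OF ut] q2_def
    by (auto simp: field_simps)
  have solution: "q'$3 = C$2$1 / U$1$1 \<and> q'$2 = q2 \<and> q'$1 = (C$3$2 + q'$2 * U$1$2) / U$2$2 \<longleftrightarrow>
      q' = q" for q'
    by (auto simp: q_def vec_eq_iff forall_3 vector_3)
  show ?thesis
    unfolding triangular_system solution by simp
qed

lemma skew_mult_rotation:
  assumes "rotation_matrix R"
  shows "skew p ** R = R ** skew (transpose R *v p)"
proof -
  have "R *v (transpose R *v p) = p"
    using assms orthogonal_matrix_transpose_mult_eq_iff[of R] unfolding rotation_matrix_def by metis
  then have "cross3 p (R *v x) = R *v cross3 (transpose R *v p) x" for x
    using cross_rotation_matrix[OF assms] by metis
  then show ?thesis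
    by (simp add: matrix_eq matrix_vector_mul_assoc[symmetric])
qed

lemma blockmult_screw_eq_iff:
  assumes "rotation_matrix R"
  shows "(A, B) = blockmult (screw R p) (U1, U2) \<longleftrightarrow>
    A = R ** U1 \<and> U2 = transpose R ** B - skew (transpose R *v p) ** U1"
proof -
  have RtR: "transpose R ** R = mat 1" and RRt: "R ** transpose R = mat 1"
    using assms by (simp_all add: rotation_matrix_def orthogonal_matrix_def)
  have "B = skew p ** R ** U1 + R ** U2 \<longleftrightarrow> B = R ** (skew (transpose R *v p) ** U1 + U2)"
    by (simp add: skew_mult_rotation[OF assms] matrix_mul_assoc matrix_add_ldistrib)
  also have "\<dots> \<longleftrightarrow> transpose R ** B = skew (transpose R *v p) ** U1 + U2"
    by (metis RtR RRt matrix_mul_assoc matrix_mul_lid)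
  finally show ?thesis
    by (auto simp: blockmult_def screw_def matrix_mul_assoc)
qed

lemma screw_factorization_exists:
  fixes A B :: "real^3^3"
  assumes "cross3 (column 1 A) (column 2 A) \<noteq> 0"
  shows "\<exists>R p U1 U2. rotation_matrix R \<and> upper_triangular3 U1 \<and> upper_triangular3 U2 \<and>
    U1$1$1 > 0 \<and> U1$2$2 > 0 \<and> (A, B) = blockmult (screw R p) (U1, U2)"
proof -
  obtain R U1 where R: "rotation_matrix R" "upper_triangular3 U1" "U1$1$1 > 0" "U1$2$2 > 0"
    and A: "A = R ** U1"
    using rotation_upper_triangular3_factor_exists[OF assms] by blast
  then obtain q where q: "upper_triangular3 (transpose R ** B - skew q ** U1)"
    using ex1_upper_triangular3_diff_skew_mult[of U1 "transpose R ** B"] by force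
  have "transpose R *v (R *v q) = q"
    using R(1) orthogonal_matrix_transpose_mult_eq_iff[of R] by (simp add: rotation_matrix_def)
  then have "(A, B) = blockmult (screw R (R *v q)) (U1, transpose R ** B - skew q ** U1)"
    unfolding blockmult_screw_eq_iff[OF R(1)] using A by simp
  then show ?thesis
    using R q by blast
qed

lemma screw_factorization_unique:
  assumes R: "rotation_matrix R" "upper_triangular3 U1" "upper_triangular3 U2"
      "U1$1$1 > 0" "U1$2$2 > 0"
    and V: "is_screw S" "upper_triangular3 V1" "upper_triangular3 V2" "V1$1$1 > 0" "V1$2$2 > 0"
    and eq: "blockmult S (V1, V2) = blockmult (screw R p) (U1, U2)"
  shows "S = screw R p \<and> V1 = U1 \<and> V2 = U2"
proof -
  from V(1) obtain R' p' where R': "rotation_matrix R'" and S: "S = screw R' p'"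
    by (auto simp: is_screw_def)
  obtain A B where AB: "(A, B) = blockmult (screw R p) (U1, U2)"
    by (metis surj_pair)
  have "(A, B) = blockmult (screw R' p') (V1, V2)"
    using AB eq S by simp
  then have "A = R ** U1 \<and> U2 = transpose R ** B - skew (transpose R *v p) ** U1"
    and "A = R' ** V1 \<and> V2 = transpose R' ** B - skew (transpose R' *v p') ** V1"
    using AB unfolding blockmult_screw_eq_iff[OF R(1)] blockmult_screw_eq_iff[OF R'] by simp_all
  moreover from this have "R' = R" "V1 = U1"
    using rotation_upper_triangular3_factor_unique[OF R' V(2,4,5) R(1,2,4,5)] by simp_all
  moreover from calculation have "transpose R *v p' = transpose R *v p"
    using ex1_upper_triangular3_diff_skew_mult[OF R(2), of "transpose R ** B"] R(3,4,5) V(3)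
    by (metis less_irrefl)
  then have "p' = p"
    using R(1) orthogonal_matrix_transpose_mult_eq_iff[of R] unfolding rotation_matrix_def by metis
  ultimately show ?thesis
    using S by simp
qed

theorem theorem1:
  fixes A B :: "real^3^3"
  assumes "norm (column 1 A) \<noteq> 0"
    and "cross3 (column 1 A) (column 2 A) \<noteq> 0"
  shows "\<exists>!(S, U). is_screw S \<and>
           upper_triangular3 (fst U) \<and> upper_triangular3 (snd U) \<and>
           fst U $ 1 $ 1 > 0 \<and> fst U $ 2 $ 2 > 0 \<and>
           (A, B) = blockmult S U"
proof -
  obtain R p U1 U2 where R: "rotation_matrix R" "upper_triangular3 U1" "upper_triangular3 U2"
      "U1$1$1 > 0" "U1$2$2 > 0" and AB: "(A, B) = blockmult (screw R p) (U1, U2)"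
    using screw_factorization_exists[OF assms(2)] by blast
  have "is_screw (screw R p)"
    using R(1) by (auto simp: is_screw_def)
  then show ?thesis
    unfolding prod.case_eq_if using R AB screw_factorization_unique[OF R]
    by (intro ex1I[of _ "(screw R p, (U1, U2))"]) (simp, metis prod.collapse)
qed

end
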